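(* Let $f:\mathbb{R}^n\to\mathbb{R}$ be a differentiable convex function, let $B'\ge B>0$, $\mathbf{x}\in[-B',B']^n$, $\mathbf{x}^*\in[-B,B]^n$ and $0<\lambda\le1$. For $i\in[n]$ define $\zeta_i=\lambda$ if $x_i=0$; $\zeta_i=0$ if $|x_i|\ge B$ and $\nabla_i f(\mathbf{x})\cdot x_i<0$; $\zeta_i=1$ otherwise; and let $i^*\in\arg\max_i\zeta_i|\nabla_i f(\mathbf{x})|$. Then at least one of the following holds: (i) $|\nabla_{i^*}f(\mathbf{x})|\ge\dfrac{f(\mathbf{x})-f(\mathbf{x}^* )}{\|\mathbf{x}^*\|_1+\lambda\|\mathbf{x}\|_1}$; (ii) $|\nabla_{i^*}f(\mathbf{x})|\ge\dfrac{f(\mathbf{x})-f(\mathbf{x}^* )}{\lambda^{-1}\|\mathbf{x}^*\|_1+\|\mathbf{x}\|_1}$ and $x_{i^*}\neq0$. *)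

theory Defs
  imports "HOL-Analysis.Analysis"
begin

definition partial_grad :: "(real^'n \<Rightarrow> real) \<Rightarrow> real^'n \<Rightarrow> 'n \<Rightarrow> real" where
  "partial_grad f x i = frechet_derivative f (at x) (axis i 1)"

definition l1norm :: "real^'n \<Rightarrow> real" where
  "l1norm x = (\<Sum>i\<in>UNIV. \<bar>x $ i\<bar>)"

definition zeta :: "(real^'n \<Rightarrow> real) \<Rightarrow> real \<Rightarrow> real \<Rightarrow> real^'n \<Rightarrow> 'n \<Rightarrow> real" where
  "zeta f B lam x i =
     (if x $ i = 0 then lam
      else if \<bar>x $ i\<bar> \<ge> B \<and> partial_grad f x i * x $ i < 0 then 0
      else 1)"

end

theory Submission
  imports Defs
begin

text \<open>
  Convexity gives the first-order bound \<open>f x - f x\<^sup>* \<le> \<Sum>\<^sub>i \<nabla>\<^sub>if(x) (x\<^sub>i - x\<^sup>*\<^sub>i)\<close>. Each term is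
  bounded by \<open>M c\<^sub>i\<close>, where \<open>M = \<zeta>\<^sub>i\<^sub>* |\<nabla>\<^sub>i\<^sub>*f(x)|\<close> is the maximal weighted gradient entry and
  \<open>c\<^sub>i = |x\<^sup>*\<^sub>i| / \<lambda>\<close> if \<open>x\<^sub>i = 0\<close>, \<open>c\<^sub>i = |x\<^sub>i| + |x\<^sup>*\<^sub>i|\<close> otherwise; coordinates with \<open>\<zeta>\<^sub>i = 0\<close>
  contribute a nonpositive term, since there \<open>|x\<^sup>*\<^sub>i| \<le> B \<le> |x\<^sub>i|\<close> and the gradient points
  inwards. Summing gives \<open>f x - f x\<^sup>* \<le> M (\<lambda>\<^sup>-\<^sup>1 \<parallel>x\<^sup>*\<parallel>\<^sub>1 + \<parallel>x\<parallel>\<^sub>1)\<close>. If \<open>x\<^sub>i\<^sub>* = 0\<close> then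
  \<open>M = \<lambda> |\<nabla>\<^sub>i\<^sub>*f(x)|\<close>, which yields (i); otherwise \<open>M \<le> |\<nabla>\<^sub>i\<^sub>*f(x)|\<close>, which yields (ii).
\<close>

lemma convex_on_has_derivative_ge:
  fixes f :: "'a::real_normed_vector \<Rightarrow> real"
  assumes cvx: "convex_on UNIV f" and d: "(f has_derivative f') (at x)"
  shows "f x + f' (y - x) \<le> f y"
proof -
  define h where "h t = f (x + t *\<^sub>R (y - x))" for t :: real
  have "convex_on UNIV h"
  proof (rule convex_onI)
    fix s t u :: real
    assume "0 < u" "u < 1"
    have "x + ((1 - u) * s + u * t) *\<^sub>R (y - x)
          = (1 - u) *\<^sub>R (x + s *\<^sub>R (y - x)) + u *\<^sub>R (x + t *\<^sub>R (y - x))"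
      by (simp add: algebra_simps)
    then show "h ((1 - u) *\<^sub>R s + u *\<^sub>R t) \<le> (1 - u) * h s + u * h t"
      using \<open>0 < u\<close> \<open>u < 1\<close> cvx unfolding h_def convex_on_def by auto
  qed simp
  have "((\<lambda>t. x + t *\<^sub>R (y - x)) has_derivative (\<lambda>t. t *\<^sub>R (y - x))) (at 0)"
    by (auto intro!: derivative_eq_intros)
  then have "(h has_derivative (\<lambda>t. f' (t *\<^sub>R (y - x)))) (at 0)"
    unfolding h_def using has_derivative_compose[of "\<lambda>t. x + t *\<^sub>R (y - x)" _ 0 UNIV f f'] d
    by simp
  moreover have "(\<lambda>t. f' (t *\<^sub>R (y - x))) = (\<lambda>t. f' (y - x) * t)"
    using has_derivative_linear[OF d] by (simp add: linear_scale mult.commute)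
  ultimately have "(h has_field_derivative f' (y - x)) (at 0)"
    by (simp add: has_field_derivative_def)
  then have "f' (y - x) * (1 - 0) \<le> h 1 - h 0"
    by (intro convex_on_imp_above_tangent[OF \<open>convex_on UNIV h\<close>]) auto
  then show ?thesis by (simp add: h_def)
qed

lemma frechet_derivative_eq_sum_partial_grad:
  fixes f :: "real^'n \<Rightarrow> real"
  assumes "f differentiable (at x)"
  shows "frechet_derivative f (at x) v = (\<Sum>i\<in>UNIV. v $ i * partial_grad f x i)"
proof -
  define f' where "f' = frechet_derivative f (at x)"
  have lin: "linear f'"
    unfolding f'_def using assms by (rule linear_frechet_derivative)
  have "f' v = f' (\<Sum>i\<in>UNIV. v $ i *s axis i 1)"
    by (simp only: basis_expansion)
  also have "\<dots> = (\<Sum>i\<in>UNIV. v $ i * f' (axis i 1))"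
    unfolding linear_sum[OF lin] scalar_mult_eq_scaleR linear_scale[OF lin] by simp
  finally show ?thesis
    unfolding f'_def partial_grad_def .
qed

lemma convex_gap_le_sum_partial_grad:
  fixes f :: "real^'n \<Rightarrow> real"
  assumes "convex_on UNIV f" and "f differentiable (at x)"
  shows "f x - f y \<le> (\<Sum>i\<in>UNIV. partial_grad f x i * (x $ i - y $ i))"
proof -
  have "f x + frechet_derivative f (at x) (y - x) \<le> f y"
    using assms by (intro convex_on_has_derivative_ge frechet_derivative_works[THEN iffD1])
  moreover have "frechet_derivative f (at x) (y - x)
                 = - (\<Sum>i\<in>UNIV. partial_grad f x i * (x $ i - y $ i))"
    unfolding frechet_derivative_eq_sum_partial_grad[OF assms(2)] sum_negf[symmetric]
    by (intro sum.cong) (simp_all add: algebra_simps)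
  ultimately show ?thesis by simp
qed

lemma zeta_nonneg: "0 \<le> lam \<Longrightarrow> 0 \<le> zeta f B lam x i"
  unfolding zeta_def by simp

lemma zeta_le_one: "lam \<le> 1 \<Longrightarrow> zeta f B lam x i \<le> 1"
  unfolding zeta_def by simp

lemma partial_grad_term_le:
  fixes f :: "real^'n \<Rightarrow> real"
  assumes max: "zeta f B lam x i * \<bar>partial_grad f x i\<bar> \<le> M"
    and y: "\<bar>y $ i\<bar> \<le> B" and lam: "0 < lam"
  shows "partial_grad f x i * (x $ i - y $ i)
         \<le> M * (if x $ i = 0 then \<bar>y $ i\<bar> / lam else \<bar>x $ i\<bar> + \<bar>y $ i\<bar>)"
proof -
  define g where "g = partial_grad f x i"
  have "0 \<le> M"
    using lam by (intro order_trans[OF mult_nonneg_nonneg[OF zeta_nonneg abs_ge_zero] max]) simp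
  consider (zero) "x $ i = 0"
    | (inward) "x $ i \<noteq> 0" "B \<le> \<bar>x $ i\<bar>" "g * x $ i < 0"
    | (other) "x $ i \<noteq> 0" "\<not> (B \<le> \<bar>x $ i\<bar> \<and> g * x $ i < 0)"
    by blast
  then show ?thesis
  proof cases
    case zero
    then have "\<bar>g\<bar> \<le> M / lam"
      using max lam unfolding zeta_def g_def by (simp add: le_divide_eq mult.commute)
    then have "\<bar>g\<bar> * \<bar>y $ i\<bar> \<le> M / lam * \<bar>y $ i\<bar>"
      by (intro mult_right_mono) auto
    moreover have "g * (x $ i - y $ i) \<le> \<bar>g\<bar> * \<bar>y $ i\<bar>"
      using zero by (simp add: abs_mult[symmetric])
    ultimately show ?thesis
      using zero unfolding g_def by simp
  next
    case inward
    have "- (g * y $ i) \<le> \<bar>g\<bar> * \<bar>y $ i\<bar>"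
      by (simp add: abs_mult[symmetric])
    also have "\<dots> \<le> \<bar>g\<bar> * \<bar>x $ i\<bar>"
      using inward y by (intro mult_left_mono) auto
    also have "\<dots> = - (g * x $ i)"
      using inward by (simp add: abs_mult[symmetric])
    finally have "g * (x $ i - y $ i) \<le> 0"
      by (simp add: algebra_simps)
    moreover have "0 \<le> M * (\<bar>x $ i\<bar> + \<bar>y $ i\<bar>)"
      using \<open>0 \<le> M\<close> by simp
    ultimately show ?thesis
      using inward unfolding g_def by simp
  next
    case other
    then have "\<bar>g\<bar> \<le> M"
      using max unfolding zeta_def g_def by (simp split: if_splits)
    have "g * (x $ i - y $ i) \<le> \<bar>g\<bar> * \<bar>x $ i - y $ i\<bar>"
      by (simp add: abs_mult[symmetric])
    also have "\<dots> \<le> M * (\<bar>x $ i\<bar> + \<bar>y $ i\<bar>)"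
      using \<open>\<bar>g\<bar> \<le> M\<close> by (intro mult_mono abs_triangle_ineq4) auto
    finally show ?thesis
      using other unfolding g_def by simp
  qed
qed

lemma l1norm_nonneg: "0 \<le> l1norm x"
  unfolding l1norm_def by (simp add: sum_nonneg)

lemma convex_gap_le_max_weighted_partial_grad:
  fixes f :: "real^'n \<Rightarrow> real"
  assumes "convex_on UNIV f" and "f differentiable (at x)"
    and max: "\<And>j. zeta f B lam x j * \<bar>partial_grad f x j\<bar> \<le> M"
    and y: "\<And>i. \<bar>y $ i\<bar> \<le> B" and lam: "0 < lam" "lam \<le> 1"
  shows "f x - f y \<le> M * (inverse lam * l1norm y + l1norm x)"
proof -
  have "0 \<le> M"
    using lam by (intro order_trans[OF mult_nonneg_nonneg[OF zeta_nonneg abs_ge_zero] max]) simp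
  have "\<bar>y $ i\<bar> \<le> inverse lam * \<bar>y $ i\<bar>" for i
    using lam by (simp add: mult_le_cancel_right1 one_le_inverse_iff)
  then have weight: "(if x $ i = 0 then \<bar>y $ i\<bar> / lam else \<bar>x $ i\<bar> + \<bar>y $ i\<bar>)
                     \<le> inverse lam * \<bar>y $ i\<bar> + \<bar>x $ i\<bar>" for i
    by (auto simp: divide_inverse mult.commute)
  have "f x - f y \<le> (\<Sum>i\<in>UNIV. partial_grad f x i * (x $ i - y $ i))"
    using assms(1,2) by (rule convex_gap_le_sum_partial_grad)
  also have "\<dots> \<le> (\<Sum>i\<in>UNIV. M * (inverse lam * \<bar>y $ i\<bar> + \<bar>x $ i\<bar>))"
    using partial_grad_term_le[OF max y lam(1)] weight \<open>0 \<le> M\<close>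
    by (intro sum_mono) (meson mult_left_mono order_trans)
  also have "\<dots> = M * (inverse lam * l1norm y + l1norm x)"
    by (simp add: l1norm_def sum.distrib sum_distrib_left distrib_left)
  finally show ?thesis .
qed

lemma divide_le_of_le_mult:
  fixes d a e :: real
  assumes "d \<le> a * e" "0 \<le> e" "0 \<le> a"
  shows "d / e \<le> a"
  using assms by (cases "e = 0") (simp_all add: divide_le_eq)

theorem lemma4:
  fixes f :: "real^'n \<Rightarrow> real" and B B' lam :: real and x xs :: "real^'n" and istar :: 'n
  assumes diff: "\<And>y. f differentiable (at y)"
    and cvx: "convex_on UNIV f"
    and BB: "B' \<ge> B" "B > 0"
    and xbox: "\<And>i. \<bar>x $ i\<bar> \<le> B'"
    and xsbox: "\<And>i. \<bar>xs $ i\<bar> \<le> B"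
    and lam: "0 < lam" "lam \<le> 1"
    and argmax: "\<And>j. zeta f B lam x j * \<bar>partial_grad f x j\<bar>
                       \<le> zeta f B lam x istar * \<bar>partial_grad f x istar\<bar>"
  shows "\<bar>partial_grad f x istar\<bar> \<ge> (f x - f xs) / (l1norm xs + lam * l1norm x)
     \<or> (\<bar>partial_grad f x istar\<bar> \<ge> (f x - f xs) / (inverse lam * l1norm xs + l1norm x)
         \<and> x $ istar \<noteq> 0)"
proof -
  define g where "g = \<bar>partial_grad f x istar\<bar>"
  define E where "E = inverse lam * l1norm xs + l1norm x"
  have "0 \<le> E"
    unfolding E_def using lam l1norm_nonneg[of x] l1norm_nonneg[of xs] by simp
  have gap: "f x - f xs \<le> zeta f B lam x istar * g * E"
    unfolding g_def E_def using convex_gap_le_max_weighted_partial_grad[OF cvx diff argmax xsbox lam] .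
  show ?thesis
  proof (cases "x $ istar = 0")
    case True
    have "lam * E = l1norm xs + lam * l1norm x"
      unfolding E_def using lam by (simp add: algebra_simps)
    then have "f x - f xs \<le> g * (l1norm xs + lam * l1norm x)"
      using gap True by (simp add: zeta_def) (metis mult.assoc mult.commute)
    then show ?thesis
      using lam l1norm_nonneg[of x] l1norm_nonneg[of xs]
      unfolding g_def by (intro disjI1 divide_le_of_le_mult) auto
  next
    case False
    have "zeta f B lam x istar * g * E \<le> g * E"
      using zeta_nonneg[OF less_imp_le[OF lam(1)]] zeta_le_one[OF lam(2)] \<open>0 \<le> E\<close>
      unfolding g_def by (intro mult_right_mono mult_left_le_one_le) auto
    then have "f x - f xs \<le> g * E"
      using gap by linarith
    then show ?thesis
      using False \<open>0 \<le> E\<close> unfolding g_def E_def by (intro disjI2 conjI divide_le_of_le_mult) auto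
  qed
qed

end
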